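(* Let $r\ge 0$ and $\ell\ge 1$ be integers, let $G$ be a graph, and let $H$ be an $r$-shallow minor of $G\boxtimes K_\ell$. Then for every integer $s\ge 1$, $$\mathrm{scol}_s(H)\le \ell\,\mathrm{scol}_{2rs+2r+s}(G)\quad\text{and}\quad \mathrm{wcol}_s(H)\le \ell\,\mathrm{wcol}_{2rs+2r+s}(G).$$
   Context: Graphs are finite, simple, undirected. The strong product $G\boxtimes K_\ell$ has vertex set $V(G)\times[\ell]$ with distinct $(a,i),(b,j)$ adjacent iff $a=b$ or $ab\in E(G)$. A model of $H$ in $G'$ assigns to each $v\in V(H)$ a connected subgraph $\mu(v)$ of $G'$, pairwise vertex-disjoint, such that each edge $vw\in E(H)$ has an edge of $G'$ between $\mu(v)$ and $\mu(w)$; $H$ is an $r$-shallow minor of $G'$ if some model has all $\mu(v)$ of radius at most $r$. For a graph $G$, a total order $\preceq$ of $V(G)$, a vertex $v$ and an integer $s\ge1$: $R(G,\preceq,v,s)$ is the set of vertices $w$ for which there is a path $v=w_0,w_1,\dots,w_{s'}=w$ with $0\le s'\le s$, $w\preceq v$, and $v\prec w_i$ for all $i\in[s'-1]$; $Q(G,\preceq,v,s)$ is the set of vertices $w$ for which there is such a path with $w\preceq v$ and $w\prec w_i$ for all $i\in[s'-1]$. The $s$-strong colouring number $\mathrm{scol}_s(G)$ (resp. $s$-weak colouring number $\mathrm{wcol}_s(G)$) is the minimum over total orders $\preceq$ of $\max_v|R(G,\preceq,v,s)|$ (resp. $\max_v|Q(G,\preceq,v,s)|$). *)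

theory Defs
  imports Main
begin

type_synonym 'a ugraph = "'a set \<times> 'a set set"

abbreviation verts :: "'a ugraph \<Rightarrow> 'a set" where "verts G \<equiv> fst G"
abbreviation edges :: "'a ugraph \<Rightarrow> 'a set set" where "edges G \<equiv> snd G"

definition graph :: "'a ugraph \<Rightarrow> bool" where
  "graph G \<longleftrightarrow> finite (verts G) \<and>
     (\<forall>e\<in>edges G. \<exists>u v. u \<noteq> v \<and> u \<in> verts G \<and> v \<in> verts G \<and> e = {u, v})"

definition is_walk :: "'a ugraph \<Rightarrow> 'a list \<Rightarrow> bool" where
  "is_walk G ws \<longleftrightarrow> ws \<noteq> [] \<and> set ws \<subseteq> verts G \<and>
     (\<forall>i. Suc i < length ws \<longrightarrow> {ws ! i, ws ! Suc i} \<in> edges G)"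

definition is_path :: "'a ugraph \<Rightarrow> 'a list \<Rightarrow> bool" where
  "is_path G ws \<longleftrightarrow> is_walk G ws \<and> distinct ws"

definition subgraph :: "'a ugraph \<Rightarrow> 'a ugraph \<Rightarrow> bool" where
  "subgraph S G \<longleftrightarrow> graph S \<and> verts S \<subseteq> verts G \<and> edges S \<subseteq> edges G"

definition connected_graph :: "'a ugraph \<Rightarrow> bool" where
  "connected_graph G \<longleftrightarrow> verts G \<noteq> {} \<and>
     (\<forall>x\<in>verts G. \<forall>y\<in>verts G. \<exists>ws. is_walk G ws \<and> hd ws = x \<and> last ws = y)"

definition radius_le :: "'a ugraph \<Rightarrow> nat \<Rightarrow> bool" where
  "radius_le G r \<longleftrightarrow> (\<exists>c\<in>verts G. \<forall>x\<in>verts G.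
      \<exists>ws. is_walk G ws \<and> hd ws = c \<and> last ws = x \<and> length ws \<le> r + 1)"

definition strong_product_K :: "'a ugraph \<Rightarrow> nat \<Rightarrow> ('a \<times> nat) ugraph" where
  "strong_product_K G l =
    (verts G \<times> {1..l},
     {{(a, i), (b, j)} | a i b j. (a, i) \<noteq> (b, j) \<and> a \<in> verts G \<and> b \<in> verts G \<and>
        i \<in> {1..l} \<and> j \<in> {1..l} \<and> (a = b \<or> {a, b} \<in> edges G)})"

definition shallow_minor :: "nat \<Rightarrow> 'b ugraph \<Rightarrow> 'c ugraph \<Rightarrow> bool" where
  "shallow_minor r H G' \<longleftrightarrow> (\<exists>\<mu> :: 'b \<Rightarrow> 'c ugraph.
     (\<forall>v\<in>verts H. subgraph (\<mu> v) G' \<and> connected_graph (\<mu> v) \<and> radius_le (\<mu> v) r) \<and>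
     (\<forall>v\<in>verts H. \<forall>w\<in>verts H. v \<noteq> w \<longrightarrow> verts (\<mu> v) \<inter> verts (\<mu> w) = {}) \<and>
     (\<forall>v\<in>verts H. \<forall>w\<in>verts H. {v, w} \<in> edges H \<longrightarrow>
        (\<exists>x\<in>verts (\<mu> v). \<exists>y\<in>verts (\<mu> w). {x, y} \<in> edges G')))"

text \<open>Orders are relations ord with (x,y) in ord meaning x \<preceq> y.\<close>
definition sreach :: "'a ugraph \<Rightarrow> 'a rel \<Rightarrow> 'a \<Rightarrow> nat \<Rightarrow> 'a set" where
  "sreach G ord v s = {w. \<exists>ws. is_path G ws \<and> hd ws = v \<and> last ws = w \<and>
      length ws \<le> s + 1 \<and> (w, v) \<in> ord \<and>
      (\<forall>i. 0 < i \<and> i < length ws - 1 \<longrightarrow> (v, ws ! i) \<in> ord \<and> ws ! i \<noteq> v)}"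

definition wreach :: "'a ugraph \<Rightarrow> 'a rel \<Rightarrow> 'a \<Rightarrow> nat \<Rightarrow> 'a set" where
  "wreach G ord v s = {w. \<exists>ws. is_path G ws \<and> hd ws = v \<and> last ws = w \<and>
      length ws \<le> s + 1 \<and> (w, v) \<in> ord \<and>
      (\<forall>i. 0 < i \<and> i < length ws - 1 \<longrightarrow> (w, ws ! i) \<in> ord \<and> ws ! i \<noteq> w)}"

definition scol :: "nat \<Rightarrow> 'a ugraph \<Rightarrow> nat" where
  "scol s G = (LEAST k. \<exists>ord. linear_order_on (verts G) ord \<and>
      (\<forall>v\<in>verts G. card (sreach G ord v s) \<le> k))"

definition wcol :: "nat \<Rightarrow> 'a ugraph \<Rightarrow> nat" where
  "wcol s G = (LEAST k. \<exists>ord. linear_order_on (verts G) ord \<and>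
      (\<forall>v\<in>verts G. card (wreach G ord v s) \<le> k))"

end

(*
  Project every branch set mu v of the model in G \<boxtimes> K_l to its shadow in G.  Shadows of
  adjacent vertices of H touch, and any two vertices of a shadow are joined inside it by a walk
  with at most 2r + 1 vertices.  Hence an H-path with at most s edges lifts to a G-walk with at
  most (s + 1)(2r + 1) = 2rs + 2r + s + 1 vertices running through the shadows along the path.

  Given an optimal order of G, order H by the least vertex (the root) of each shadow.  If w is
  strongly (weakly) s-reachable from v in H, the lifted walk from root v to root w, shortened to a
  path, witnesses that some vertex of the shadow of w is strongly (weakly) (2rs + 2r + s)-reachable
  from root v in G: for strong reachability it is the first vertex of the path below root v, for
  weak reachability root w itself.  As the branch sets are disjoint and a vertex of G has l
  copies, every vertex of G lies in at most l shadows, which gives the factor l.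
*)
theory Submission
  imports Defs
begin

section \<open>Walks that may pause\<close>

definition lazy_walk :: "'a ugraph \<Rightarrow> 'a list \<Rightarrow> bool" where
  "lazy_walk G xs \<longleftrightarrow> xs \<noteq> [] \<and> set xs \<subseteq> verts G \<and>
     successively (\<lambda>a b. a = b \<or> {a, b} \<in> edges G) xs"

lemma is_walk_iff_successively:
  "is_walk G ws \<longleftrightarrow> ws \<noteq> [] \<and> set ws \<subseteq> verts G \<and> successively (\<lambda>a b. {a, b} \<in> edges G) ws"
  by (simp add: is_walk_def successively_conv_nth)

lemma lazy_walk_append:
  "lazy_walk G xs \<Longrightarrow> lazy_walk G ys \<Longrightarrow> last xs = hd ys \<or> {last xs, hd ys} \<in> edges G \<Longrightarrow>
   lazy_walk G (xs @ ys)"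
  unfolding lazy_walk_def by (auto simp: successively_append_iff)

lemma lazy_walk_rev: "lazy_walk G xs \<Longrightarrow> lazy_walk G (rev xs)"
  unfolding lazy_walk_def by (auto elim!: successively_mono simp: insert_commute)

lemma lazy_walk_join:
  assumes "lazy_walk G xs" "lazy_walk G ys" "last xs = hd ys"
  shows "lazy_walk G (butlast xs @ ys)" "hd (butlast xs @ ys) = hd xs"
proof -
  obtain xs' x where xs: "xs = xs' @ [x]"
    using assms(1) unfolding lazy_walk_def by (cases xs rule: rev_cases) auto
  show "lazy_walk G (butlast xs @ ys)"
    using assms unfolding xs lazy_walk_def by (auto simp: successively_append_iff)
  show "hd (butlast xs @ ys) = hd xs"
    using assms(3) unfolding xs by (cases xs') simp_all
qed

lemma successively_reflclp_distinct:
  "successively (\<lambda>a b. a = b \<or> P a b) xs \<Longrightarrow> distinct xs \<Longrightarrow> successively P xs"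
  by (induction "\<lambda>a b. a = b \<or> P a b" xs rule: successively.induct) auto

text \<open>Cutting out the closed subwalks between repeated vertices.\<close>
lemma lazy_walk_imp_path:
  assumes "lazy_walk G xs"
  shows "\<exists>ps. is_path G ps \<and> hd ps = hd xs \<and> last ps = last xs \<and>
           length ps \<le> length xs \<and> set ps \<subseteq> set xs"
  using assms
proof (induction "length xs" arbitrary: xs rule: less_induct)
  case less
  show ?case
  proof (cases "distinct xs")
    case True
    then have "is_path G xs" using less.prems
      by (auto simp: is_path_def is_walk_iff_successively lazy_walk_def intro: successively_reflclp_distinct)
    then show ?thesis by blast
  next
    case False
    then obtain as y bs cs where xs: "xs = as @ [y] @ bs @ [y] @ cs"
      using not_distinct_decomp by blast
    let ?ys = "as @ [y] @ cs"
    have "lazy_walk G ?ys" using less.prems unfolding xs lazy_walk_def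
      by (auto simp: successively_append_iff successively_Cons)
    moreover have "length ?ys < length xs" using xs by simp
    moreover have "hd ?ys = hd xs" "last ?ys = last xs"
      unfolding xs by (cases as; simp) (cases cs; simp)
    ultimately show ?thesis using less.hyps xs by fastforce
  qed
qed

lemma is_path_prefix: "is_path G (xs @ ys) \<Longrightarrow> xs \<noteq> [] \<Longrightarrow> is_path G xs"
  unfolding is_path_def is_walk_iff_successively successively_append_iff by auto

lemma in_set_hd_last_or_interior:
  assumes "u \<in> set ws"
  obtains "u = hd ws" | "u = last ws" | i where "0 < i" "i < length ws - 1" "ws ! i = u"
proof -
  obtain i where i: "i < length ws" "ws ! i = u" using assms by (auto simp: in_set_conv_nth)
  then consider "i = 0" | "i = length ws - 1" | "0 < i \<and> i < length ws - 1" by linarith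
  then show ?thesis
  proof cases
    case 1
    then show ?thesis using that i assms by (simp add: hd_conv_nth)
  next
    case 2
    moreover have "ws \<noteq> []" using assms by auto
    ultimately show ?thesis using that i by (simp add: last_conv_nth)
  next
    case 3
    then show ?thesis using that i by blast
  qed
qed

section \<open>Linear orders given as relations\<close>

lemma linear_order_onD:
  assumes "linear_order_on V ord"
  shows "trans ord" "antisym ord" "a \<in> V \<Longrightarrow> (a, a) \<in> ord"
    "a \<in> V \<Longrightarrow> b \<in> V \<Longrightarrow> a \<noteq> b \<Longrightarrow> (a, b) \<in> ord \<or> (b, a) \<in> ord"
  using assms
  unfolding linear_order_on_def partial_order_on_def preorder_on_def refl_on_def total_on_def
  by auto

lemma linear_order_on_least:
  assumes "linear_order_on V ord" "finite S" "S \<noteq> {}" "S \<subseteq> V"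
  shows "\<exists>m\<in>S. \<forall>y\<in>S. (m, y) \<in> ord"
  using assms(2-4)
proof (induction S rule: finite_ne_induct)
  case (singleton x)
  then show ?case using linear_order_onD(3)[OF assms(1)] by auto
next
  case (insert x F)
  then obtain m where m: "m \<in> F" "\<forall>y\<in>F. (m, y) \<in> ord" by auto
  show ?case
  proof (cases "(x, m) \<in> ord")
    case True
    then have "\<forall>y\<in>insert x F. (x, y) \<in> ord"
      using m insert.prems linear_order_onD(1,3)[OF assms(1)] unfolding trans_def by blast
    then show ?thesis by blast
  next
    case False
    then have "(m, x) \<in> ord" using m insert linear_order_onD(4)[OF assms(1)] by blast
    then show ?thesis using m by blast
  qed
qed

lemma linear_order_on_lex_pullback:
  assumes ord: "linear_order_on B ord" and tie: "linear_order_on A tie" and f: "f ` A \<subseteq> B"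
  defines "oA \<equiv> {(u, w). u \<in> A \<and> w \<in> A \<and>
     ((f u, f w) \<in> ord \<and> f u \<noteq> f w \<or> f u = f w \<and> (u, w) \<in> tie)}"
  shows "linear_order_on A oA" "(u, w) \<in> oA \<Longrightarrow> (f u, f w) \<in> ord"
proof -
  show below: "(f u, f w) \<in> ord" if "(u, w) \<in> oA" for u w
    using that f linear_order_onD(3)[OF ord] unfolding oA_def by auto
  show "linear_order_on A oA"
    unfolding linear_order_on_def partial_order_on_def preorder_on_def
  proof (intro conjI)
    show "refl_on A oA"
      using linear_order_onD(3)[OF tie] unfolding oA_def refl_on_def by auto
    show "oA \<subseteq> A \<times> A"
      unfolding oA_def by auto
    show "trans oA"
    proof (rule transI)
      fix x y z assume xy: "(x, y) \<in> oA" and yz: "(y, z) \<in> oA"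
      show "(x, z) \<in> oA"
      proof (cases "f x = f z")
        case True
        then have "f x = f y"
          using below[OF xy] below[OF yz] linear_order_onD(2)[OF ord] antisymD by metis
        then show ?thesis
          using True xy yz linear_order_onD(1)[OF tie] unfolding oA_def trans_def by auto
      next
        case False
        then show ?thesis
          using below[OF xy] below[OF yz] xy yz linear_order_onD(1)[OF ord]
          unfolding oA_def trans_def by blast
      qed
    qed
    show "antisym oA"
    proof (rule antisymI)
      fix x y assume xy: "(x, y) \<in> oA" and yx: "(y, x) \<in> oA"
      then have "f x = f y" using below linear_order_onD(2)[OF ord] antisymD by metis
      then show "x = y"
        using xy yx antisymD[OF linear_order_onD(2)[OF tie]] unfolding oA_def by auto
    qed
    show "total_on A oA"
    proof (rule total_onI)
      fix x y assume xy: "x \<in> A" "y \<in> A" "x \<noteq> y"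
      show "(x, y) \<in> oA \<or> (y, x) \<in> oA"
      proof (cases "f x = f y")
        case True
        then show ?thesis using xy linear_order_onD(4)[OF tie] unfolding oA_def by auto
      next
        case False
        moreover have "f x \<in> B" "f y \<in> B" using xy f by auto
        ultimately show ?thesis using xy linear_order_onD(4)[OF ord] unfolding oA_def by auto
      qed
    qed
  qed
qed

lemma linear_order_on_pullback:
  assumes "linear_order_on B ord" "f ` A \<subseteq> B"
  shows "\<exists>oA. linear_order_on A oA \<and> (\<forall>u w. (u, w) \<in> oA \<longrightarrow> (f u, f w) \<in> ord)"
proof -
  obtain tie where "well_order_on A tie" using well_order_on by blast
  then have "linear_order_on A tie" by (simp add: well_order_on_def)
  from linear_order_on_lex_pullback[OF assms(1) this assms(2)] show ?thesis by blast
qed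

section \<open>Reachability sets and colouring numbers\<close>

lemma sreach_subset: "sreach G ord v s \<subseteq> verts G"
  unfolding sreach_def is_path_def is_walk_def by (auto dest!: last_in_set)

lemma wreach_subset: "wreach G ord v s \<subseteq> verts G"
  unfolding wreach_def is_path_def is_walk_def by (auto dest!: last_in_set)

lemma path_first_below_in_sreach:
  assumes ord: "linear_order_on (verts G) ord"
    and ps: "is_path G ps" "hd ps = a" "(last ps, a) \<in> ord" "length ps \<le> t + 1"
  shows "\<exists>y\<in>set ps. y \<in> sreach G ord a t \<and> (y = last ps \<or> (a, y) \<notin> ord)"
proof -
  have psG: "ps \<noteq> []" "set ps \<subseteq> verts G" "distinct ps"
    using ps(1) unfolding is_path_def is_walk_def by simp_all
  then obtain rest where ps_rest: "ps = a # rest" using ps(2) by (cases ps) auto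
  show ?thesis
  proof (cases "rest = []")
    case True
    then have "a \<in> sreach G ord a t"
      using ps ps_rest unfolding sreach_def by (intro CollectI exI[of _ ps]) auto
    then show ?thesis using True ps_rest by simp
  next
    case False
    then have "\<exists>y\<in>set rest. (y, a) \<in> ord" using ps(3) ps_rest last_in_set by fastforce
    then obtain ys y zs where split: "rest = ys @ y # zs" "(y, a) \<in> ord" "\<forall>z\<in>set ys. (z, a) \<notin> ord"
      using split_list_first_prop[of rest "\<lambda>y. (y, a) \<in> ord"] by blast
    define qs where "qs = a # ys @ [y]"
    have ps_qs: "ps = qs @ zs" using ps_rest split(1) unfolding qs_def by simp
    have "y \<noteq> a" using psG(3) ps_qs unfolding qs_def by auto
    then have not_above: "(a, y) \<notin> ord"
      using split(2) linear_order_onD(2)[OF ord] unfolding antisym_def by blast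
    have "y \<in> sreach G ord a t" unfolding sreach_def
    proof (intro CollectI exI[of _ qs] conjI allI impI)
      show "is_path G qs" using is_path_prefix ps(1) ps_qs qs_def by blast
      show "hd qs = a" "last qs = y" "(y, a) \<in> ord" using split(2) unfolding qs_def by simp_all
      show "length qs \<le> t + 1" using ps(4) ps_qs by simp
      fix i assume i: "0 < i \<and> i < length qs - 1"
      then have "i - 1 < length ys" by (auto simp: qs_def)
      moreover have "qs ! i = (ys @ [y]) ! (i - 1)" using i unfolding qs_def by simp
      ultimately have "qs ! i \<in> set ys" by (simp add: nth_append)
      moreover have "set ys \<subseteq> verts G" using psG(2) ps_rest split(1) by auto
      ultimately have z: "qs ! i \<in> verts G" "(qs ! i, a) \<notin> ord" using split(3) by auto
      have aG: "a \<in> verts G" using psG ps(2) hd_in_set by blast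
      show "qs ! i \<noteq> a" using z(2) linear_order_onD(3)[OF ord aG] by blast
      then show "(a, qs ! i) \<in> ord" using linear_order_onD(4)[OF ord aG z(1)] z(2) by blast
    qed
    then show ?thesis using not_above ps_qs qs_def by auto
  qed
qed

lemma path_in_wreach:
  assumes "is_path G ps" "hd ps = a" "last ps = b" "length ps \<le> t + 1"
    and "(b, a) \<in> ord" "\<forall>y\<in>set ps. (b, y) \<in> ord"
  shows "b \<in> wreach G ord a t"
  unfolding wreach_def
proof (intro CollectI exI[of _ ps] conjI allI impI)
  fix i assume i: "0 < i \<and> i < length ps - 1"
  then have "i < length ps" by linarith
  then show "(b, ps ! i) \<in> ord" using assms(6) nth_mem by blast
  have distinct: "distinct ps" and "ps \<noteq> []"
    using assms(1) unfolding is_path_def is_walk_def by simp_all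
  then have "last ps = ps ! (length ps - 1)" by (simp add: last_conv_nth)
  moreover have "i < length ps" "length ps - 1 < length ps" using i by auto
  ultimately show "ps ! i \<noteq> b"
    using i assms(3) nth_eq_iff_index_eq[OF distinct] by auto
qed (use assms in simp_all)

lemma least_order_bound_attained:
  assumes "finite V" "\<And>ord v. R ord v \<subseteq> V"
  shows "\<exists>ord. linear_order_on V ord \<and>
    (\<forall>v\<in>V. card (R ord v) \<le> (LEAST k. \<exists>ord. linear_order_on V ord \<and> (\<forall>v\<in>V. card (R ord v) \<le> k)))"
proof (rule LeastI_ex)
  obtain ord where "well_order_on V ord" using well_order_on by blast
  moreover have "card (R ord v) \<le> card V" for v using assms by (simp add: card_mono)
  ultimately show "\<exists>k ord. linear_order_on V ord \<and> (\<forall>v\<in>V. card (R ord v) \<le> k)"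
    unfolding well_order_on_def by blast
qed

lemma scol_attained:
  "graph G \<Longrightarrow> \<exists>ord. linear_order_on (verts G) ord \<and> (\<forall>v\<in>verts G. card (sreach G ord v s) \<le> scol s G)"
  unfolding scol_def graph_def by (rule least_order_bound_attained) (simp_all add: sreach_subset)

lemma wcol_attained:
  "graph G \<Longrightarrow> \<exists>ord. linear_order_on (verts G) ord \<and> (\<forall>v\<in>verts G. card (wreach G ord v s) \<le> wcol s G)"
  unfolding wcol_def graph_def by (rule least_order_bound_attained) (simp_all add: wreach_subset)

section \<open>Projecting a shallow minor model of \<open>H\<close> in \<open>G \<boxtimes> K\<^sub>l\<close> to \<open>G\<close>\<close>

lemma strong_product_K_vertD:
  "p \<in> verts (strong_product_K G l) \<Longrightarrow> fst p \<in> verts G \<and> snd p \<in> {1..l}"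
  unfolding strong_product_K_def by auto

lemma strong_product_K_edgeD:
  "{p, q} \<in> edges (strong_product_K G l) \<Longrightarrow> fst p = fst q \<or> {fst p, fst q} \<in> edges G"
  unfolding strong_product_K_def by (auto simp: doubleton_eq_iff insert_commute)

lemma lazy_walk_map_fst:
  assumes "subgraph S (strong_product_K G l)" "is_walk S ws"
  shows "lazy_walk G (map fst ws)"
proof -
  have V: "verts S \<subseteq> verts (strong_product_K G l)" and E: "edges S \<subseteq> edges (strong_product_K G l)"
    using assms(1) by (simp_all add: subgraph_def)
  have ws: "ws \<noteq> []" "set ws \<subseteq> verts S" "successively (\<lambda>a b. {a, b} \<in> edges S) ws"
    using assms(2) unfolding is_walk_iff_successively by simp_all
  have "fst p \<in> verts G" if "p \<in> set ws" for p
    using ws(2) V strong_product_K_vertD that by blast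
  then have "set (map fst ws) \<subseteq> verts G" by auto
  moreover have "successively (\<lambda>a b. a = b \<or> {a, b} \<in> edges G) (map fst ws)"
    unfolding successively_map using ws(3)
    by (rule successively_mono) (meson E strong_product_K_edgeD subsetD)
  ultimately show ?thesis using ws(1) unfolding lazy_walk_def by simp
qed

locale shallow_minor_model =
  fixes G :: "'a ugraph" and l r :: nat and H :: "'b ugraph"
    and mu :: "'b \<Rightarrow> ('a \<times> nat) ugraph"
  assumes graph: "graph G"
    and branch: "\<And>v. v \<in> verts H \<Longrightarrow>
      subgraph (mu v) (strong_product_K G l) \<and> connected_graph (mu v) \<and> radius_le (mu v) r"
    and disjoint: "\<And>v w. v \<in> verts H \<Longrightarrow> w \<in> verts H \<Longrightarrow> v \<noteq> w \<Longrightarrow>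
      verts (mu v) \<inter> verts (mu w) = {}"
    and adjacent: "\<And>v w. v \<in> verts H \<Longrightarrow> w \<in> verts H \<Longrightarrow> {v, w} \<in> edges H \<Longrightarrow>
      \<exists>x\<in>verts (mu v). \<exists>y\<in>verts (mu w). {x, y} \<in> edges (strong_product_K G l)"
begin

lemma finite_verts: "finite (verts G)"
  using graph by (simp add: graph_def)

definition shadow :: "'b \<Rightarrow> 'a set" where
  "shadow u = fst ` verts (mu u)"

lemma shadow_subset: "u \<in> verts H \<Longrightarrow> shadow u \<subseteq> verts G"
  using branch[of u] strong_product_K_vertD unfolding shadow_def subgraph_def by fast

lemma shadow_nonempty: "u \<in> verts H \<Longrightarrow> shadow u \<noteq> {}"
  using branch[of u] unfolding shadow_def connected_graph_def by simp

lemma finite_shadow: "u \<in> verts H \<Longrightarrow> finite (shadow u)"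
  using shadow_subset finite_verts by (rule finite_subset)

lemma shadow_lazy_walk:
  assumes u: "u \<in> verts H" and "p \<in> shadow u" "q \<in> shadow u"
  shows "\<exists>W. lazy_walk G W \<and> hd W = p \<and> last W = q \<and> length W \<le> 2 * r + 1 \<and> set W \<subseteq> shadow u"
proof -
  have sub: "subgraph (mu u) (strong_product_K G l)" and "radius_le (mu u) r"
    using branch[OF u] by auto
  then obtain c where c: "\<forall>x\<in>verts (mu u). \<exists>ws. is_walk (mu u) ws \<and> hd ws = c \<and> last ws = x \<and> length ws \<le> r + 1"
    unfolding radius_le_def by blast
  have "\<exists>A. lazy_walk G A \<and> hd A = fst c \<and> last A = x \<and> length A \<le> r + 1 \<and> set A \<subseteq> shadow u"
    if x: "x \<in> shadow u" for x
  proof -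
    obtain x' where "x' \<in> verts (mu u)" "x = fst x'" using x unfolding shadow_def by blast
    then obtain ws where ws: "is_walk (mu u) ws" "hd ws = c" "last ws = x'" "length ws \<le> r + 1"
      using c by blast
    then have "ws \<noteq> []" "set ws \<subseteq> verts (mu u)" unfolding is_walk_def by simp_all
    then show ?thesis
      using lazy_walk_map_fst[OF sub ws(1)] ws \<open>x = fst x'\<close> unfolding shadow_def
      by (intro exI[of _ "map fst ws"]) (auto simp: hd_map last_map)
  qed
  then obtain A B where
    A: "lazy_walk G A" "hd A = fst c" "last A = p" "length A \<le> r + 1" "set A \<subseteq> shadow u" and
    B: "lazy_walk G B" "hd B = fst c" "last B = q" "length B \<le> r + 1" "set B \<subseteq> shadow u"
    using assms(2,3) by meson
  have ne: "A \<noteq> []" "B \<noteq> []" using A(1) B(1) unfolding lazy_walk_def by simp_all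
  show ?thesis
  proof (intro exI[of _ "butlast (rev A) @ B"] conjI)
    show "lazy_walk G (butlast (rev A) @ B)" "hd (butlast (rev A) @ B) = p"
      using lazy_walk_join[OF lazy_walk_rev[OF A(1)] B(1)] A(2,3) B(2) ne by (simp_all add: last_rev hd_rev)
    show "last (butlast (rev A) @ B) = q" using B(3) ne by simp
    show "length (butlast (rev A) @ B) \<le> 2 * r + 1" using A(4) B(4) by simp
    have "set (butlast (rev A)) \<subseteq> set A" by (metis in_set_butlastD set_rev subsetI)
    then show "set (butlast (rev A) @ B) \<subseteq> shadow u" using A(5) B(5) by auto
  qed
qed

lemma adjacent_shadows:
  assumes "u \<in> verts H" "w \<in> verts H" "{u, w} \<in> edges H"
  shows "\<exists>a\<in>shadow u. \<exists>b\<in>shadow w. a = b \<or> {a, b} \<in> edges G"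
proof -
  obtain x y where "x \<in> verts (mu u)" "y \<in> verts (mu w)" "{x, y} \<in> edges (strong_product_K G l)"
    using adjacent[OF assms] by blast
  then show ?thesis using strong_product_K_edgeD unfolding shadow_def by blast
qed

lemma lazy_walk_through_shadows:
  assumes "is_walk H ws" "p \<in> shadow (hd ws)" "q \<in> shadow (last ws)"
  shows "\<exists>W. lazy_walk G W \<and> hd W = p \<and> last W = q \<and> length W \<le> length ws * (2 * r + 1) \<and>
           set W \<subseteq> (\<Union>u\<in>set ws. shadow u)"
  using assms
proof (induction ws arbitrary: p)
  case Nil
  then show ?case by (simp add: is_walk_def)
next
  case (Cons u ws)
  have u: "u \<in> verts H" using Cons.prems(1) by (simp add: is_walk_def)
  show ?case
  proof (cases "ws = []")
    case True
    then have "p \<in> shadow u" "q \<in> shadow u" using Cons.prems(2,3) by simp_all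
    then show ?thesis using shadow_lazy_walk[OF u] True by simp
  next
    case False
    have ws: "is_walk H ws" and e: "{u, hd ws} \<in> edges H"
      using Cons.prems(1) False unfolding is_walk_iff_successively by (auto simp: successively_Cons)
    have "hd ws \<in> verts H" using ws False unfolding is_walk_def by auto
    then obtain a b where a: "a \<in> shadow u" and b: "b \<in> shadow (hd ws)"
      and ab: "a = b \<or> {a, b} \<in> edges G" using adjacent_shadows[OF u _ e] by blast
    have "p \<in> shadow u" using Cons.prems(2) by simp
    then obtain W1 where W1: "lazy_walk G W1" "hd W1 = p" "last W1 = a" "length W1 \<le> 2 * r + 1"
      "set W1 \<subseteq> shadow u"
      using shadow_lazy_walk[OF u _ a] by blast
    obtain W2 where W2: "lazy_walk G W2" "hd W2 = b" "last W2 = q"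
      "length W2 \<le> length ws * (2 * r + 1)" "set W2 \<subseteq> (\<Union>u\<in>set ws. shadow u)"
      using Cons.IH[OF ws b] Cons.prems(3) False by auto
    have ne: "W1 \<noteq> []" "W2 \<noteq> []" using W1(1) W2(1) unfolding lazy_walk_def by auto
    have "lazy_walk G (W1 @ W2)"
      using lazy_walk_append[OF W1(1) W2(1)] W1(3) W2(2) ab by simp
    moreover have "hd (W1 @ W2) = p" "last (W1 @ W2) = q" using ne W1(2) W2(3) by auto
    moreover have "length (W1 @ W2) \<le> length (u # ws) * (2 * r + 1)" using W1(4) W2(4) by simp
    moreover have "set (W1 @ W2) \<subseteq> (\<Union>u\<in>set (u # ws). shadow u)" using W1(5) W2(5) by auto
    ultimately show ?thesis by blast
  qed
qed

text \<open>Disjoint branch sets contain distinct copies \<open>(y, i)\<close> of \<open>y\<close>, and there are only \<open>l\<close> of them.\<close>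
lemma card_shadows_containing_le:
  assumes "S \<subseteq> verts H" "\<forall>w\<in>S. y \<in> shadow w"
  shows "card S \<le> l"
proof -
  define copy where "copy w = (SOME i. (y, i) \<in> verts (mu w))" for w
  have "\<exists>i. (y, i) \<in> verts (mu w)" if "w \<in> S" for w
    using assms(2) that unfolding shadow_def by force
  then have copy: "\<forall>w\<in>S. (y, copy w) \<in> verts (mu w)"
    unfolding copy_def using someI_ex by metis
  have "inj_on copy S"
  proof (rule inj_onI)
    fix u w assume u: "u \<in> S" and w: "w \<in> S" and same_copy: "copy u = copy w"
    show "u = w"
    proof (rule ccontr)
      assume "u \<noteq> w"
      moreover have "u \<in> verts H" "w \<in> verts H" using u w assms(1) by auto
      ultimately have "verts (mu u) \<inter> verts (mu w) = {}" using disjoint[of u w] by simp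
      then show False using copy u w same_copy by auto
    qed
  qed
  moreover have "copy ` S \<subseteq> {1..l}"
  proof
    fix i assume "i \<in> copy ` S"
    then obtain w where w: "w \<in> S" "i = copy w" by blast
    then have "verts (mu w) \<subseteq> verts (strong_product_K G l)"
      using branch[of w] assms(1) unfolding subgraph_def by blast
    then have "(y, i) \<in> verts (strong_product_K G l)" using copy w by auto
    then show "i \<in> {1..l}" using strong_product_K_vertD by fastforce
  qed
  ultimately show ?thesis using card_inj_on_le[of copy S "{1..l}"] by simp
qed

lemma card_le_mult_card_if_shadows_meet:
  assumes "A \<subseteq> verts H" "finite B" "\<And>w. w \<in> A \<Longrightarrow> shadow w \<inter> B \<noteq> {}"
  shows "card A \<le> l * card B"
proof -
  have "A = (\<Union>y\<in>B. {w\<in>A. y \<in> shadow w})" using assms(3) by blast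
  then have "card A \<le> (\<Sum>y\<in>B. card {w\<in>A. y \<in> shadow w})"
    using card_UN_le[OF assms(2)] by metis
  also have "\<dots> \<le> (\<Sum>y\<in>B. l)"
    using assms(1) by (intro sum_mono card_shadows_containing_le) auto
  finally show ?thesis by (simp add: mult.commute)
qed

end

lemma shallow_minor_model_exists:
  assumes "graph G" "shallow_minor r H (strong_product_K G l)"
  obtains mu where "shallow_minor_model G l r H mu"
proof -
  from assms(2) obtain mu where
    "\<forall>v\<in>verts H. subgraph (mu v) (strong_product_K G l) \<and> connected_graph (mu v) \<and> radius_le (mu v) r"
    "\<forall>v\<in>verts H. \<forall>w\<in>verts H. v \<noteq> w \<longrightarrow> verts (mu v) \<inter> verts (mu w) = {}"
    "\<forall>v\<in>verts H. \<forall>w\<in>verts H. {v, w} \<in> edges H \<longrightarrow>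
       (\<exists>x\<in>verts (mu v). \<exists>y\<in>verts (mu w). {x, y} \<in> edges (strong_product_K G l))"
    unfolding shallow_minor_def by blast
  with assms(1) have "shallow_minor_model G l r H mu"
    unfolding shallow_minor_model_def by simp
  then show thesis by (rule that)
qed

section \<open>Ordering \<open>H\<close> by the roots of the shadows\<close>

locale ordered_shallow_minor_model = shallow_minor_model +
  fixes ord :: "'a rel"
  assumes linear_order: "linear_order_on (verts G) ord"
begin

lemma ord_trans: "(a, b) \<in> ord \<Longrightarrow> (b, c) \<in> ord \<Longrightarrow> (a, c) \<in> ord"
  using linear_order_onD(1)[OF linear_order] by (rule transD)

definition root :: "'b \<Rightarrow> 'a" where
  "root u = (SOME a. a \<in> shadow u \<and> (\<forall>b\<in>shadow u. (a, b) \<in> ord))"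

lemma root_least:
  assumes "u \<in> verts H"
  shows "root u \<in> shadow u" "b \<in> shadow u \<Longrightarrow> (root u, b) \<in> ord"
proof -
  have "\<exists>a. a \<in> shadow u \<and> (\<forall>b\<in>shadow u. (a, b) \<in> ord)"
    using linear_order_on_least[OF linear_order finite_shadow shadow_nonempty shadow_subset] assms
    by blast
  then have "root u \<in> shadow u \<and> (\<forall>b\<in>shadow u. (root u, b) \<in> ord)"
    unfolding root_def by (rule someI_ex)
  then show "root u \<in> shadow u" "b \<in> shadow u \<Longrightarrow> (root u, b) \<in> ord" by simp_all
qed

lemma root_in_verts: "u \<in> verts H \<Longrightarrow> root u \<in> verts G"
  using root_least(1) shadow_subset by blast

lemma exists_order_monotone_root:
  "\<exists>oH. linear_order_on (verts H) oH \<and> (\<forall>u w. (u, w) \<in> oH \<longrightarrow> (root u, root w) \<in> ord)"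
  by (rule linear_order_on_pullback[OF linear_order]) (auto simp: root_in_verts)

lemma path_between_roots:
  assumes "is_path H ws" "length ws \<le> s + 1"
  shows "\<exists>ps. is_path G ps \<and> hd ps = root (hd ws) \<and> last ps = root (last ws) \<and>
           length ps \<le> 2 * r * s + 2 * r + s + 1 \<and> set ps \<subseteq> (\<Union>u\<in>set ws. shadow u)"
proof -
  have walk: "is_walk H ws" and "ws \<noteq> []" "set ws \<subseteq> verts H"
    using assms(1) unfolding is_path_def is_walk_def by simp_all
  then have "hd ws \<in> verts H" "last ws \<in> verts H" by auto
  then obtain W where W: "lazy_walk G W" "hd W = root (hd ws)" "last W = root (last ws)"
      "length W \<le> length ws * (2 * r + 1)" "set W \<subseteq> (\<Union>u\<in>set ws. shadow u)"
    using lazy_walk_through_shadows[OF walk] root_least(1) by blast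
  have "length ws * (2 * r + 1) \<le> (s + 1) * (2 * r + 1)"
    using assms(2) by (rule mult_right_mono) simp
  also have "\<dots> = 2 * r * s + 2 * r + s + 1" by (simp add: algebra_simps)
  finally have "length W \<le> 2 * r * s + 2 * r + s + 1" using W(4) by linarith
  moreover obtain ps where "is_path G ps" "hd ps = hd W" "last ps = last W"
      "length ps \<le> length W" "set ps \<subseteq> set W"
    using lazy_walk_imp_path[OF W(1)] by blast
  ultimately show ?thesis using W by (intro exI[of _ ps]) auto
qed

lemma sreach_meets_shadow:
  assumes mono: "\<forall>u w. (u, w) \<in> oH \<longrightarrow> (root u, root w) \<in> ord"
    and v: "v \<in> verts H" and w: "w \<in> sreach H oH v s"
  shows "shadow w \<inter> sreach G ord (root v) (2 * r * s + 2 * r + s) \<noteq> {}"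
proof -
  obtain ws where ws: "is_path H ws" "hd ws = v" "last ws = w" "length ws \<le> s + 1" "(w, v) \<in> oH"
    and interior: "\<forall>i. 0 < i \<and> i < length ws - 1 \<longrightarrow> (v, ws ! i) \<in> oH \<and> ws ! i \<noteq> v"
    using w unfolding sreach_def by blast
  have wsH: "ws \<noteq> []" "set ws \<subseteq> verts H" using ws(1) unfolding is_path_def is_walk_def by simp_all
  then have wH: "w \<in> verts H" using ws(3) last_in_set by blast
  obtain ps where ps: "is_path G ps" "hd ps = root v" "last ps = root w"
      "length ps \<le> 2 * r * s + 2 * r + s + 1" "set ps \<subseteq> (\<Union>u\<in>set ws. shadow u)"
    using path_between_roots[OF ws(1,4)] ws(2,3) by blast
  have above_or_in_shadow: "(root v, y) \<in> ord \<or> y \<in> shadow w" if y: "y \<in> set ps" for y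
  proof -
    obtain u where u: "u \<in> set ws" "y \<in> shadow u" using ps(5) y by blast
    then have uH: "u \<in> verts H" using wsH by blast
    from u(1) show ?thesis
    proof (cases rule: in_set_hd_last_or_interior)
      case 1
      then show ?thesis using root_least(2)[OF v] u(2) ws(2) by simp
    next
      case 2
      then show ?thesis using u(2) ws(3) by simp
    next
      case (3 i)
      then have "(v, u) \<in> oH" using interior by blast
      then have "(root v, root u) \<in> ord" using mono by blast
      moreover have "(root u, y) \<in> ord" using root_least(2)[OF uH u(2)] .
      ultimately show ?thesis using ord_trans by blast
    qed
  qed
  have "(last ps, root v) \<in> ord" using mono[rule_format, OF ws(5)] ps(3) by simp
  then obtain y where y: "y \<in> set ps" "y \<in> sreach G ord (root v) (2 * r * s + 2 * r + s)"
      "y = last ps \<or> (root v, y) \<notin> ord"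
    using path_first_below_in_sreach[OF linear_order ps(1,2) _ ps(4)] by blast
  have "y \<in> shadow w"
    using y(3) root_least(1)[OF wH] ps(3) above_or_in_shadow[OF y(1)] by auto
  then show ?thesis using y(2) by blast
qed

lemma wreach_meets_shadow:
  assumes mono: "\<forall>u w. (u, w) \<in> oH \<longrightarrow> (root u, root w) \<in> ord"
    and v: "v \<in> verts H" and w: "w \<in> wreach H oH v s"
  shows "shadow w \<inter> wreach G ord (root v) (2 * r * s + 2 * r + s) \<noteq> {}"
proof -
  obtain ws where ws: "is_path H ws" "hd ws = v" "last ws = w" "length ws \<le> s + 1" "(w, v) \<in> oH"
    and interior: "\<forall>i. 0 < i \<and> i < length ws - 1 \<longrightarrow> (w, ws ! i) \<in> oH \<and> ws ! i \<noteq> w"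
    using w unfolding wreach_def by blast
  have wsH: "ws \<noteq> []" "set ws \<subseteq> verts H" using ws(1) unfolding is_path_def is_walk_def by simp_all
  then have wH: "w \<in> verts H" using ws(3) last_in_set by blast
  obtain ps where ps: "is_path G ps" "hd ps = root v" "last ps = root w"
      "length ps \<le> 2 * r * s + 2 * r + s + 1" "set ps \<subseteq> (\<Union>u\<in>set ws. shadow u)"
    using path_between_roots[OF ws(1,4)] ws(2,3) by blast
  have below: "(root w, y) \<in> ord" if y: "y \<in> set ps" for y
  proof -
    obtain u where u: "u \<in> set ws" "y \<in> shadow u" using ps(5) y by blast
    then have uH: "u \<in> verts H" using wsH by blast
    from u(1) have "(root w, root u) \<in> ord"
    proof (cases rule: in_set_hd_last_or_interior)
      case 1
      then show ?thesis using mono[rule_format, OF ws(5)] ws(2) by simp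
    next
      case 2
      then show ?thesis using linear_order_onD(3)[OF linear_order root_in_verts[OF wH]] ws(3) by simp
    next
      case (3 i)
      then have "(w, u) \<in> oH" using interior by blast
      then show ?thesis using mono by blast
    qed
    moreover have "(root u, y) \<in> ord" using root_least(2)[OF uH u(2)] .
    ultimately show ?thesis by (rule ord_trans)
  qed
  have "root w \<in> wreach G ord (root v) (2 * r * s + 2 * r + s)"
    using path_in_wreach[OF ps(1-3)] ps(4) mono[rule_format, OF ws(5)] below by simp
  then show ?thesis using root_least(1)[OF wH] by blast
qed

end

context shallow_minor_model
begin

lemma scol_le_mult: "scol s H \<le> l * scol (2 * r * s + 2 * r + s) G"
proof -
  let ?t = "2 * r * s + 2 * r + s"
  obtain ord where ord: "linear_order_on (verts G) ord" "\<forall>a\<in>verts G. card (sreach G ord a ?t) \<le> scol ?t G"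
    using scol_attained[OF graph] by blast
  interpret ordered_shallow_minor_model G l r H mu ord
    by unfold_locales (rule ord(1))
  obtain oH where oH: "linear_order_on (verts H) oH" "\<forall>u w. (u, w) \<in> oH \<longrightarrow> (root u, root w) \<in> ord"
    using exists_order_monotone_root by blast
  have "card (sreach H oH v s) \<le> l * scol ?t G" if v: "v \<in> verts H" for v
  proof -
    have "card (sreach H oH v s) \<le> l * card (sreach G ord (root v) ?t)"
      by (rule card_le_mult_card_if_shadows_meet[OF sreach_subset finite_subset[OF sreach_subset finite_verts]
            sreach_meets_shadow[OF oH(2) v]])
    also have "\<dots> \<le> l * scol ?t G" using ord(2) root_in_verts[OF v] by simp
    finally show ?thesis .
  qed
  then show ?thesis unfolding scol_def using oH(1) by (intro Least_le) blast
qed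

lemma wcol_le_mult: "wcol s H \<le> l * wcol (2 * r * s + 2 * r + s) G"
proof -
  let ?t = "2 * r * s + 2 * r + s"
  obtain ord where ord: "linear_order_on (verts G) ord" "\<forall>a\<in>verts G. card (wreach G ord a ?t) \<le> wcol ?t G"
    using wcol_attained[OF graph] by blast
  interpret ordered_shallow_minor_model G l r H mu ord
    by unfold_locales (rule ord(1))
  obtain oH where oH: "linear_order_on (verts H) oH" "\<forall>u w. (u, w) \<in> oH \<longrightarrow> (root u, root w) \<in> ord"
    using exists_order_monotone_root by blast
  have "card (wreach H oH v s) \<le> l * wcol ?t G" if v: "v \<in> verts H" for v
  proof -
    have "card (wreach H oH v s) \<le> l * card (wreach G ord (root v) ?t)"
      by (rule card_le_mult_card_if_shadows_meet[OF wreach_subset finite_subset[OF wreach_subset finite_verts]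
            wreach_meets_shadow[OF oH(2) v]])
    also have "\<dots> \<le> l * wcol ?t G" using ord(2) root_in_verts[OF v] by simp
    finally show ?thesis .
  qed
  then show ?thesis unfolding wcol_def using oH(1) by (intro Least_le) blast
qed

end

theorem theorem18:
  fixes G :: "'a ugraph" and H :: "'b ugraph" and r l s :: nat
  assumes "graph G" and "graph H" and "l \<ge> 1"
    and "shallow_minor r H (strong_product_K G l)"
    and "s \<ge> 1"
  shows "scol s H \<le> l * scol (2*r*s + 2*r + s) G \<and>
         wcol s H \<le> l * wcol (2*r*s + 2*r + s) G"
proof -
  obtain mu where "shallow_minor_model G l r H mu"
    using shallow_minor_model_exists[OF assms(1,4)] .
  then interpret shallow_minor_model G l r H mu .
  show ?thesis using scol_le_mult wcol_le_mult by (simp add: mult.assoc)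
qed

end
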